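(* Let $G$ be a labeled complete graph, let $0<\gamma<\alpha<1/2$, and let $x$ be a fractional clustering of $G$. Run the following algorithm: set $S=V(G)$; while $S\ne\emptyset$, for each $u\in S$ let $T_u=\{w\in S\setminus\{u\}: x_{uw}\le\alpha\}$ and $T^*_u=\{w\in S\setminus\{u\}:x_{uw}\le\gamma\}$, choose a pivot $u\in S$ maximizing $|T^*_u|$, let $T=T_u$, and if $\sum_{w\in T}x_{uw}\ge\alpha|T|/2$ output $\{u\}$ and remove $u$ from $S$, otherwise output $\{u\}\cup T$ and remove $\{u\}\cup T$ from $S$. Consider any iteration in which the cluster $\{u\}\cup T$ is output (i.e. $\sum_{w\in T}x_{uw}<\alpha|T|/2$), and let $S$ denote the set of remaining vertices at the start of that iteration. Then for every $z\in S\setminus(\{u\}\cup T)$, \[ \bigl|N^+(z)\cap(\{u\}\cup T)\bigr| \le \max\left\{\tfrac{1}{1-2\alpha},\tfrac{2}{\alpha}\right\}\left(\sum_{w\in N^+(z)\cap(\{u\}\cup T)}x_{zw}+\sum_{w\in N^-(z)\cap(\{u\}\cup T)}(1-x_{zw})\right). \]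
   Context: A fractional clustering of $G$ is a vector $x$ indexed by unordered pairs of distinct vertices with $x_{uv}\in[0,1]$ and $x_{vz}\le x_{vw}+x_{wz}$ for all distinct $v,w,z$; $x_{uu}=0$. $N^+(z)$, $N^-(z)$ are the sets of vertices joined to $z$ by a $+$ edge, resp. $-$ edge. (In the paper's terminology: the left side is the total cluster-cost and the sum on the right the total LP-cost of the edges from $z$ to the cluster $\{u\}\cup T$.) *)

theory Defs
  imports Complex_Main
begin

text \<open>A labeled complete graph on the finite vertex set V: every pair of distinct
vertices is joined by a + edge (pos u v) or a - edge (not pos u v); pos is symmetric.\<close>
definition labeled_complete_graph :: "'a set \<Rightarrow> ('a \<Rightarrow> 'a \<Rightarrow> bool) \<Rightarrow> bool" where
  "labeled_complete_graph V pos \<longleftrightarrow> finite V \<and> (\<forall>u\<in>V. \<forall>v\<in>V. pos u v = pos v u)"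

definition Npos :: "'a set \<Rightarrow> ('a \<Rightarrow> 'a \<Rightarrow> bool) \<Rightarrow> 'a \<Rightarrow> 'a set" where
  "Npos V pos z = {w\<in>V. w \<noteq> z \<and> pos z w}"

definition Nneg :: "'a set \<Rightarrow> ('a \<Rightarrow> 'a \<Rightarrow> bool) \<Rightarrow> 'a \<Rightarrow> 'a set" where
  "Nneg V pos z = {w\<in>V. w \<noteq> z \<and> \<not> pos z w}"

definition fractional_clustering :: "'a set \<Rightarrow> ('a \<Rightarrow> 'a \<Rightarrow> real) \<Rightarrow> bool" where
  "fractional_clustering V x \<longleftrightarrow>
     (\<forall>u\<in>V. x u u = 0) \<and>
     (\<forall>u\<in>V. \<forall>v\<in>V. x u v = x v u \<and> 0 \<le> x u v \<and> x u v \<le> 1) \<and>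
     (\<forall>v\<in>V. \<forall>w\<in>V. \<forall>z\<in>V. v \<noteq> w \<and> w \<noteq> z \<and> v \<noteq> z \<longrightarrow> x v z \<le> x v w + x w z)"

text \<open>T_u (threshold alpha) and T*_u (threshold gamma) inside the remaining set S.\<close>
definition Tset :: "'a set \<Rightarrow> ('a \<Rightarrow> 'a \<Rightarrow> real) \<Rightarrow> real \<Rightarrow> 'a \<Rightarrow> 'a set" where
  "Tset S x t u = {w \<in> S - {u}. x u w \<le> t}"

inductive alg_state :: "'a set \<Rightarrow> ('a \<Rightarrow> 'a \<Rightarrow> real) \<Rightarrow> real \<Rightarrow> real \<Rightarrow> 'a set \<Rightarrow> bool"
  for V x \<alpha> \<gamma> where
  init: "alg_state V x \<alpha> \<gamma> V"
| step: "\<lbrakk> alg_state V x \<alpha> \<gamma> S; u \<in> S;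
           \<forall>v\<in>S. card (Tset S x \<gamma> v) \<le> card (Tset S x \<gamma> u) \<rbrakk> \<Longrightarrow>
         alg_state V x \<alpha> \<gamma>
           (if (\<Sum>w\<in>Tset S x \<alpha> u. x u w) \<ge> \<alpha> * real (card (Tset S x \<alpha> u)) / 2
            then S - {u} else S - ({u} \<union> Tset S x \<alpha> u))"

end

theory Submission
  imports Defs
begin

text \<open>Let \<open>C = {u} \<union> T\<close> and \<open>z \<notin> C\<close>, so \<open>x u z > \<alpha>\<close> while \<open>x u w \<le> \<alpha>\<close> on \<open>C\<close>.
If \<open>x u z > 1 - \<alpha>\<close>, the triangle inequality gives \<open>x z w \<ge> 1 - 2\<alpha>\<close> on \<open>C\<close>, so every
\<open>+\<close> edge from \<open>z\<close> into \<open>C\<close> costs at least \<open>1 - 2\<alpha>\<close>. Otherwise \<open>\<alpha> < x u z \<le> 1 - \<alpha>\<close>, and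
every edge \<open>zw\<close> with \<open>w \<in> C\<close> costs at least \<open>\<alpha> - x u w\<close> whatever its sign; summing over \<open>C\<close>
and using \<open>\<Sum>\<^sub>T x u w < \<alpha>|T|/2\<close> bounds the total cost from below by \<open>\<alpha>|C|/2\<close>.\<close>

lemma alg_state_subset: "alg_state V x \<alpha> \<gamma> S \<Longrightarrow> S \<subseteq> V"
  by (induction rule: alg_state.induct) auto

lemma fractional_clustering_sym_bounds:
  assumes "fractional_clustering V x" "a \<in> V" "b \<in> V"
  shows "x a b = x b a" "0 \<le> x a b" "x a b \<le> 1"
  using assms unfolding fractional_clustering_def by auto

lemma fractional_clustering_triangle:
  assumes fc: "fractional_clustering V x" and V: "a \<in> V" "b \<in> V" "c \<in> V"
  shows "x a c \<le> x a b + x b c"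
proof -
  have diag: "x a a = 0" "x b b = 0" and nonneg: "0 \<le> x a b" "0 \<le> x b c"
    using fc V unfolding fractional_clustering_def by auto
  show ?thesis
  proof (cases "a = b \<or> b = c \<or> a = c")
    case True
    with diag nonneg show ?thesis by auto
  next
    case False
    with fc V show ?thesis unfolding fractional_clustering_def by blast
  qed
qed

lemma fractional_clustering_dist_ge:
  assumes fc: "fractional_clustering V x" and V: "u \<in> V" "w \<in> V" "z \<in> V"
  shows "x u z - x u w \<le> x z w"
  using fractional_clustering_triangle[OF fc V(1,2,3)] fractional_clustering_sym_bounds[OF fc]
    V by auto

lemma fractional_clustering_dist_le:
  assumes fc: "fractional_clustering V x" and V: "u \<in> V" "w \<in> V" "z \<in> V"
  shows "x z w \<le> x u z + x u w"
  using fractional_clustering_triangle[OF fc V(3,1,2)] fractional_clustering_sym_bounds[OF fc]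
    V by auto

definition lp_cost :: "('a \<Rightarrow> 'a \<Rightarrow> bool) \<Rightarrow> ('a \<Rightarrow> 'a \<Rightarrow> real) \<Rightarrow> 'a \<Rightarrow> 'a \<Rightarrow> real" where
  "lp_cost pos x z w = (if pos z w then x z w else 1 - x z w)"

lemma sum_Npos_Nneg_eq_sum_lp_cost:
  assumes "finite C" "C \<subseteq> V" "z \<notin> C"
  shows "(\<Sum>w\<in>Npos V pos z \<inter> C. x z w) + (\<Sum>w\<in>Nneg V pos z \<inter> C. 1 - x z w)
       = (\<Sum>w\<in>C. lp_cost pos x z w)"
proof -
  have "Npos V pos z \<inter> C = C \<inter> {w. pos z w}" "Nneg V pos z \<inter> C = C \<inter> - {w. pos z w}"
    using assms unfolding Npos_def Nneg_def by auto
  then show ?thesis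
    unfolding lp_cost_def by (simp only: sum.If_cases[OF assms(1)])
qed

lemma sum_lp_cost_nonneg:
  assumes "fractional_clustering V x" "C \<subseteq> V" "z \<in> V"
  shows "0 \<le> (\<Sum>w\<in>C. lp_cost pos x z w)"
  using assms fractional_clustering_sym_bounds(2,3)[OF assms(1)]
  by (intro sum_nonneg) (auto simp: lp_cost_def subset_iff)

lemma card_Npos_le_far:
  assumes fc: "fractional_clustering V x" and CV: "finite C" "C \<subseteq> V"
    and uV: "u \<in> V" and zV: "z \<in> V" and zC: "z \<notin> C"
    and close: "\<forall>w\<in>C. x u w \<le> \<alpha>" and far: "1 - \<alpha> < x u z" and \<alpha>: "\<alpha> < 1/2"
  shows "real (card (Npos V pos z \<inter> C)) \<le> 1 / (1 - 2 * \<alpha>) * (\<Sum>w\<in>C. lp_cost pos x z w)"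
proof -
  let ?P = "Npos V pos z \<inter> C"
  have "1 - 2 * \<alpha> \<le> x z w" if "w \<in> ?P" for w
  proof -
    have "w \<in> C" "w \<in> V" using that CV by auto
    then show ?thesis using close far fractional_clustering_dist_ge[OF fc uV _ zV, of w] by auto
  qed
  then have "real (card ?P) * (1 - 2 * \<alpha>) \<le> (\<Sum>w\<in>?P. x z w)"
    using sum_bounded_below[of ?P "1 - 2 * \<alpha>" "x z"] by simp
  also have "\<dots> \<le> (\<Sum>w\<in>C. lp_cost pos x z w)"
  proof -
    have "0 \<le> (\<Sum>w\<in>Nneg V pos z \<inter> C. 1 - x z w)"
      using CV zV fractional_clustering_sym_bounds(3)[OF fc]
      by (intro sum_nonneg) (auto simp: Nneg_def)
    then show ?thesis
      using sum_Npos_Nneg_eq_sum_lp_cost[OF CV zC, where pos=pos and x=x] by linarith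
  qed
  finally show ?thesis using \<alpha> by (simp add: field_simps)
qed

lemma lp_cost_ge_near:
  assumes fc: "fractional_clustering V x" and V: "u \<in> V" "w \<in> V" "z \<in> V"
    and near: "\<alpha> < x u z" "x u z \<le> 1 - \<alpha>"
  shows "\<alpha> - x u w \<le> lp_cost pos x z w"
  using fractional_clustering_dist_ge[OF fc V] fractional_clustering_dist_le[OF fc V] near
  unfolding lp_cost_def by auto

lemma card_cluster_le_near:
  assumes fc: "fractional_clustering V x" and TV: "finite T" "T \<subseteq> V"
    and uV: "u \<in> V" and zV: "z \<in> V" and uT: "u \<notin> T"
    and near: "\<alpha> < x u z" "x u z \<le> 1 - \<alpha>" and \<alpha>: "0 < \<alpha>"
    and small: "(\<Sum>w\<in>T. x u w) < \<alpha> * real (card T) / 2"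
  shows "real (card (insert u T)) \<le> 2 / \<alpha> * (\<Sum>w\<in>insert u T. lp_cost pos x z w)"
proof -
  have xuu: "x u u = 0" using fc uV unfolding fractional_clustering_def by auto
  have card: "real (card (insert u T)) = real (card T) + 1" using TV uT by simp
  have "\<alpha> * real (card (insert u T)) / 2 \<le> \<alpha> * real (card (insert u T)) - (\<Sum>w\<in>T. x u w)"
    unfolding card using small \<alpha> by (simp add: field_simps)
  also have "\<dots> = (\<Sum>w\<in>insert u T. \<alpha> - x u w)"
    using TV uT xuu by (simp add: sum_subtractf)
  also have "\<dots> \<le> (\<Sum>w\<in>insert u T. lp_cost pos x z w)"
    using TV uV by (intro sum_mono lp_cost_ge_near[OF fc uV _ zV near]) auto
  finally show ?thesis using \<alpha> by (simp add: field_simps)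
qed

theorem lemma5:
  fixes V :: "'a set" and pos :: "'a \<Rightarrow> 'a \<Rightarrow> bool" and x :: "'a \<Rightarrow> 'a \<Rightarrow> real"
    and \<alpha> \<gamma> :: real and S :: "'a set" and u z :: 'a
  assumes G: "labeled_complete_graph V pos"
    and params: "0 < \<gamma>" "\<gamma> < \<alpha>" "\<alpha> < 1/2"
    and frac: "fractional_clustering V x"
    and reach: "alg_state V x \<alpha> \<gamma> S"
    and uS: "u \<in> S"
    and pivot: "\<forall>v\<in>S. card (Tset S x \<gamma> v) \<le> card (Tset S x \<gamma> u)"
    and small: "(\<Sum>w\<in>Tset S x \<alpha> u. x u w) < \<alpha> * real (card (Tset S x \<alpha> u)) / 2"
    and zS: "z \<in> S - ({u} \<union> Tset S x \<alpha> u)"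
  shows "real (card (Npos V pos z \<inter> ({u} \<union> Tset S x \<alpha> u)))
     \<le> max (1 / (1 - 2 * \<alpha>)) (2 / \<alpha>) *
        ((\<Sum>w\<in>Npos V pos z \<inter> ({u} \<union> Tset S x \<alpha> u). x z w)
         + (\<Sum>w\<in>Nneg V pos z \<inter> ({u} \<union> Tset S x \<alpha> u). 1 - x z w))"
proof -
  define T where "T = Tset S x \<alpha> u"
  define K where "K = (\<Sum>w\<in>insert u T. lp_cost pos x z w)"
  have SV: "S \<subseteq> V" using alg_state_subset[OF reach] .
  have TV: "T \<subseteq> V" and uV: "u \<in> V" and zV: "z \<in> V" and uT: "u \<notin> T"
    using SV uS zS unfolding T_def Tset_def by auto
  then have finT: "finite T"
    using G finite_subset unfolding labeled_complete_graph_def by blast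
  have zC: "z \<notin> insert u T" and far_z: "\<alpha> < x u z"
    using zS unfolding T_def Tset_def by auto
  have close: "\<forall>w\<in>insert u T. x u w \<le> \<alpha>"
    using frac uV params unfolding T_def Tset_def fractional_clustering_def by auto
  have K0: "0 \<le> K" unfolding K_def using sum_lp_cost_nonneg[OF frac _ zV] TV uV by simp
  have "real (card (Npos V pos z \<inter> insert u T)) \<le> max (1 / (1 - 2 * \<alpha>)) (2 / \<alpha>) * K"
  proof (cases "1 - \<alpha> < x u z")
    case True
    have "real (card (Npos V pos z \<inter> insert u T)) \<le> 1 / (1 - 2 * \<alpha>) * K"
      unfolding K_def using card_Npos_le_far[OF frac _ _ uV zV zC close True params(3)] TV finT uV
      by simp
    also have "\<dots> \<le> max (1 / (1 - 2 * \<alpha>)) (2 / \<alpha>) * K"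
      by (rule mult_right_mono[OF max.cobounded1 K0])
    finally show ?thesis .
  next
    case False
    have "real (card (Npos V pos z \<inter> insert u T)) \<le> real (card (insert u T))"
      using finT by (intro of_nat_mono card_mono) auto
    also have "\<dots> \<le> 2 / \<alpha> * K"
      using card_cluster_le_near[OF frac finT TV uV zV uT far_z _ _ small[folded T_def], of pos]
        False params
      unfolding K_def by linarith
    also have "\<dots> \<le> max (1 / (1 - 2 * \<alpha>)) (2 / \<alpha>) * K"
      by (rule mult_right_mono[OF max.cobounded2 K0])
    finally show ?thesis .
  qed
  then show ?thesis
    using sum_Npos_Nneg_eq_sum_lp_cost[OF _ _ zC] TV finT uV unfolding K_def T_def by simp
qed

end
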